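(* In the ladder model, the density $\rho_\infty$ of the stationary distribution of $(\Delta_n)_{n\ge0}$ satisfies (i) the integral equations $$\rho_\infty(d)=e^{d}\int_{-\infty}^{d}\rho_\infty(\delta)\,d\delta+e^{2d}\int_{d}^{\infty}\rho_\infty(\delta)e^{-\delta}\,d\delta\quad (d<0),$$ $$\rho_\infty(d)=e^{-2d}\int_{-\infty}^{d}\rho_\infty(\delta)e^{\delta}\,d\delta+e^{-d}\int_{d}^{\infty}\rho_\infty(\delta)\,d\delta\quad (d\ge0);$$ (ii) $\rho_\infty$ is even: $\rho_\infty(d)=\rho_\infty(-d)$ for all $d\in\mathbb{R}$.
   Context: Ladder model $\mathcal{G}^{\{\mathcal{X},\mathcal{Y},\mathcal{Z}\}}$: for $n\ge0$, $G_n$ has vertex set $\{0,\dots,n\}\times\{0,1\}$ and edges: for $1\le i\le n$, an edge with weight $X_i$ joining $(i-1,0)$ and $(i,0)$, an edge with weight $Y_i$ joining $(i-1,1)$ and $(i,1)$; for $0\le i\le n$, an edge with weight $Z_i$ joining $(i,0)$ and $(i,1)$. All weights are independent standard exponential random variables. Path weight = sum of edge weights. $l_n$ ($l_n'$) is the minimal weight of a path in $G_n$ from $(0,0)$ to $(n,0)$ (to $(n,1)$), and $\Delta_n=l_n'-l_n$; $(\Delta_n)$ is an ergodic Markov chain given by $\Delta_0$ standard exponential and $\Delta_n=\min\{\Delta_{n-1}+Y_n,X_n+Z_n\}-\min\{X_n,\Delta_{n-1}+Y_n+Z_n\}$, and $\rho_\infty$ is the density of its unique stationary distribution. *)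

theory Defs
  imports "HOL-Probability.Probability"
begin

definition Exp1 :: "real measure" where
  "Exp1 = density lborel (\<lambda>x. ennreal (exponential_density 1 x))"

definition ladder_step :: "real \<Rightarrow> real \<Rightarrow> real \<Rightarrow> real \<Rightarrow> real" where
  "ladder_step \<delta> x y z = min (\<delta> + y) (x + z) - min x (\<delta> + y + z)"

definition ladder_stationary :: "real measure \<Rightarrow> bool" where
  "ladder_stationary \<mu> \<longleftrightarrow> prob_space \<mu> \<and> sets \<mu> = sets borel \<and>
     distr (\<mu> \<Otimes>\<^sub>M (Exp1 \<Otimes>\<^sub>M (Exp1 \<Otimes>\<^sub>M Exp1))) borel
       (\<lambda>(\<delta>, x, y, z). ladder_step \<delta> x y z) = \<mu>"

end

theory Submission
  imports Defs "HOL-Real_Asymp.Real_Asymp"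
begin

(* Write X, Y, Z for independent standard exponentials.  Clamping the step function as
   max (-Z) (min (d + Y - X) Z) shows that one step started at d has distribution function
     P(step d X Y Z <= t) = step_cdf d t = exp_cdf t + exp (-|t|) * laplace_cdf (t - d),
   where exp_cdf is the Exp(1) and laplace_cdf the Laplace (X - Y) distribution function.
   The function step_cdf d has an explicit, piecewise exponential density step_density d.

   (1) Stationarity means F_mu(t) = integral step_cdf d t dmu(d); by Fubini mu then has the
       density rho(x) = integral step_density d x dmu(d), and since step_density d x is of the
       form exp(..x..) * exp(..d..) on {d <= x} and on {d >= x}, this is exactly the pair of
       integral equations of the theorem.
   (2) For evenness, step_cdf (-d) t = 1 - step_cdf d (-t) implies that the reflection of a
       stationary law is stationary as well.  The distribution function F of any stationary
       law solves F t = exp_cdf t + exp (-|t|) * (laplace_density * F)(t), and this equation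
       halves the sup-distance of two solutions, so it has a unique solution: the law and its
       reflection coincide, and so the density is even. *)

section \<open>Exponential integrals over intervals\<close>

lemma nn_integral_exp_Icc:
  fixes c e a b :: real
  assumes c: "c \<noteq> 0" and ab: "a \<le> b"
  shows "(\<integral>\<^sup>+x. ennreal (exp (c*x+e)) * indicator {a..b} x \<partial>lborel)
         = ennreal ((exp (c*b+e) - exp (c*a+e)) / c)"
proof -
  have "\<And>x. ((\<lambda>x. exp (c*x+e)/c) has_real_derivative exp (c*x+e)) (at x within {a..b})"
    using c by (auto intro!: derivative_eq_intros simp: field_simps)
  then have "((\<lambda>x. exp (c*x+e)) has_integral (exp (c*b+e)/c - exp (c*a+e)/c)) {a..b}"
    by (intro fundamental_theorem_of_calculus[OF ab])
       (auto simp: has_real_derivative_iff_has_vector_derivative)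
  then show ?thesis
    by (subst nn_integral_has_integral_lebesgue'[where I="exp (c*b+e)/c - exp (c*a+e)/c"])
       (auto simp: diff_divide_distrib)
qed

lemma nn_integral_exp_Ici:
  fixes c e a :: real
  assumes c: "c < 0"
  shows "(\<integral>\<^sup>+x. ennreal (exp (c*x+e)) * indicator {a..} x \<partial>lborel)
         = ennreal (- exp (c*a+e) / c)"
proof -
  have "((\<lambda>x. exp (c*x+e)/c) \<longlongrightarrow> 0) at_top"
    using c by real_asymp
  then have "(\<integral>\<^sup>+x. ennreal (exp (c*x+e)) * indicator {a..} x \<partial>lborel) = ennreal (0 - exp (c*a+e)/c)"
    by (intro nn_integral_FTC_atLeast)
       (use c in \<open>auto intro!: derivative_eq_intros simp: field_simps\<close>)
  then show ?thesis by simp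
qed

lemma nn_integral_exp_Iic:
  fixes c e b :: real
  assumes c: "0 < c"
  shows "(\<integral>\<^sup>+x. ennreal (exp (c*x+e)) * indicator {..b} x \<partial>lborel)
         = ennreal (exp (c*b+e) / c)"
proof -
  have "(\<integral>\<^sup>+x. ennreal (exp (c*x+e)) * indicator {..b} x \<partial>lborel)
      = ennreal \<bar>-1::real\<bar> * (\<integral>\<^sup>+x. ennreal (exp (c*(0 + -1*x)+e)) * indicator {..b} (0 + -1*x) \<partial>lborel)"
    by (rule nn_integral_real_affine) auto
  also have "\<dots> = (\<integral>\<^sup>+x. ennreal (exp ((-c)*x+e)) * indicator {-b..} x \<partial>lborel)"
    by (auto intro!: nn_integral_cong simp: indicator_def)
  also have "\<dots> = ennreal (- exp ((-c)*(-b)+e) / (-c))"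
    using c by (intro nn_integral_exp_Ici) auto
  finally show ?thesis by simp
qed

text \<open>Lebesgue integrals do not see the endpoints of an interval, so the three formulas above
  also hold for open and half-open intervals.\<close>

lemma nn_integral_indicator_endpoints_cong:
  fixes S T :: "real set"
  assumes "S - {a, b} = T - {a, b}"
  shows "(\<integral>\<^sup>+x. f x * indicator S x \<partial>lborel) = (\<integral>\<^sup>+x. f x * indicator T x \<partial>lborel)"
proof (rule nn_integral_cong_AE)
  have "AE x in lborel. x \<noteq> a" "AE x in lborel. x \<noteq> b" by (rule AE_lborel_singleton)+
  then show "AE x in lborel. f x * indicator S x = f x * indicator T x"
  proof eventually_elim
    case (elim x)
    then have "x \<in> S \<longleftrightarrow> x \<in> T" using assms by blast
    then show ?case by (simp add: indicator_def)
  qed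
qed

lemma nn_integral_exp_Icc_ae:
  fixes c e a b :: real
  assumes "c \<noteq> 0" "a \<le> b" "S - {a, b} = {a..b} - {a, b}"
  shows "(\<integral>\<^sup>+x. ennreal (exp (c*x+e)) * indicator S x \<partial>lborel)
         = ennreal ((exp (c*b+e) - exp (c*a+e)) / c)"
  using nn_integral_indicator_endpoints_cong[OF assms(3)] nn_integral_exp_Icc[OF assms(1,2)] by simp

lemma nn_integral_exp_Ici_ae:
  fixes c e a :: real
  assumes "c < 0" "S - {a} = {a..} - {a}"
  shows "(\<integral>\<^sup>+x. ennreal (exp (c*x+e)) * indicator S x \<partial>lborel)
         = ennreal (- exp (c*a+e) / c)"
  using nn_integral_indicator_endpoints_cong[of S a a "{a..}"] assms nn_integral_exp_Ici[OF assms(1)]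
  by simp

lemma nn_integral_exp_Iic_ae:
  fixes c e b :: real
  assumes "0 < c" "S - {b} = {..b} - {b}"
  shows "(\<integral>\<^sup>+x. ennreal (exp (c*x+e)) * indicator S x \<partial>lborel)
         = ennreal (exp (c*b+e) / c)"
  using nn_integral_indicator_endpoints_cong[of S b b "{..b}"] assms nn_integral_exp_Iic[OF assms(1)]
  by simp

lemma nn_integral_exp_abs:
  fixes c :: real
  assumes c: "0 < c"
  shows "(\<integral>\<^sup>+l. ennreal (exp (- (c * \<bar>l\<bar>))) \<partial>lborel) = ennreal (2 / c)"
proof -
  have left: "(\<integral>\<^sup>+l. ennreal (exp (c*l+0)) * indicator {..<0} l \<partial>lborel) = ennreal (exp (c*0+0) / c)"
    using c by (intro nn_integral_exp_Iic_ae) auto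
  have right: "(\<integral>\<^sup>+l. ennreal (exp ((-c)*l+0)) * indicator {0..} l \<partial>lborel) = ennreal (- exp ((-c)*0+0) / (-c))"
    using c by (intro nn_integral_exp_Ici_ae) auto
  have "(\<integral>\<^sup>+l. ennreal (exp (- (c * \<bar>l\<bar>))) \<partial>lborel)
      = (\<integral>\<^sup>+l. ennreal (exp (c*l+0)) * indicator {..<0} l
               + ennreal (exp ((-c)*l+0)) * indicator {0..} l \<partial>lborel)"
    by (intro nn_integral_cong) (auto simp: indicator_def)
  also have "\<dots> = (\<integral>\<^sup>+l. ennreal (exp (c*l+0)) * indicator {..<0} l \<partial>lborel)
                 + (\<integral>\<^sup>+l. ennreal (exp ((-c)*l+0)) * indicator {0..} l \<partial>lborel)"
    by (rule nn_integral_add) auto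
  also have "\<dots> = ennreal (2 / c)"
    unfolding left right using c by (simp add: ennreal_plus[symmetric] del: ennreal_plus)
  finally show ?thesis .
qed

section \<open>The standard exponential and the Laplace distribution\<close>

lemma prob_space_Exp1: "prob_space Exp1"
  unfolding Exp1_def using prob_space_exponential_density[of 1] by simp

lemma sets_Exp1[simp, measurable_cong]: "sets Exp1 = sets borel"
  unfolding Exp1_def by simp

lemma space_Exp1[simp]: "space Exp1 = UNIV"
  unfolding Exp1_def by simp

lemma emeasure_Exp1_UNIV[simp]: "emeasure Exp1 UNIV = 1"
  using prob_space.emeasure_space_1[OF prob_space_Exp1] by simp

lemma nn_integral_Exp1:
  assumes [measurable]: "g \<in> borel_measurable borel"
  shows "(\<integral>\<^sup>+x. g x \<partial>Exp1) = (\<integral>\<^sup>+x. ennreal (exponential_density 1 x) * g x \<partial>lborel)"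
  unfolding Exp1_def by (subst nn_integral_density) auto

definition exp_cdf :: "real \<Rightarrow> real" where
  "exp_cdf t = (if 0 \<le> t then 1 - exp (-t) else 0)"

lemma exp_cdf_nonneg: "0 \<le> exp_cdf t"
  by (simp add: exp_cdf_def)

lemma emeasure_Exp1_atMost: "emeasure Exp1 {..c} = ennreal (exp_cdf c)"
proof -
  have "emeasure Exp1 {..c} = (\<integral>\<^sup>+z. ennreal (exponential_density 1 z) * indicator {..c} z \<partial>lborel)"
    unfolding Exp1_def by (subst emeasure_density) auto
  also have "\<dots> = ennreal (exp_cdf c)"
  proof (cases "0 \<le> c")
    case True
    have "(\<integral>\<^sup>+z. ennreal (exponential_density 1 z) * indicator {..c} z \<partial>lborel)
       = (\<integral>\<^sup>+z. ennreal (exp ((-1)*z+0)) * indicator {0..c} z \<partial>lborel)"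
      by (intro nn_integral_cong) (auto simp: exponential_density_def indicator_def)
    also have "\<dots> = ennreal ((exp ((-1)*c+0) - exp ((-1)*0+0)) / (-1))"
      using True by (intro nn_integral_exp_Icc) auto
    finally show ?thesis using True by (simp add: exp_cdf_def)
  next
    case False
    have "(\<lambda>z. ennreal (exponential_density 1 z) * indicator {..c} z) = (\<lambda>z. 0)"
      using False by (intro ext) (auto simp: exponential_density_def indicator_def)
    then show ?thesis using False by (simp add: exp_cdf_def)
  qed
  finally show ?thesis .
qed

text \<open>Density and distribution function of the Laplace law, the law of X - Y.\<close>

definition laplace_density :: "real \<Rightarrow> real" where
  "laplace_density l = exp (- \<bar>l\<bar>) / 2"

definition laplace_cdf :: "real \<Rightarrow> real" where
  "laplace_cdf s = (if 0 \<le> s then 1 - exp (-s) / 2 else exp s / 2)"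

lemma laplace_density_nonneg: "0 \<le> laplace_density x"
  by (simp add: laplace_density_def)

lemma laplace_density_measurable[measurable]: "laplace_density \<in> borel_measurable borel"
  unfolding laplace_density_def by measurable

lemma laplace_cdf_measurable[measurable]: "laplace_cdf \<in> borel_measurable borel"
  unfolding laplace_cdf_def by measurable

lemma laplace_cdf_nonneg: "0 \<le> laplace_cdf s"
proof (cases "0 \<le> s")
  case True
  then have "exp (-s) \<le> 1" by simp
  then have "0 \<le> 1 - exp (-s) / 2" by linarith
  then show ?thesis using True by (simp add: laplace_cdf_def)
qed (simp add: laplace_cdf_def)

lemma laplace_cdf_le_1: "laplace_cdf s \<le> 1"
proof (cases "0 \<le> s")
  case False
  then have "exp s \<le> 1" by simp
  then have "exp s / 2 \<le> 1" by linarith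
  then show ?thesis using False by (simp add: laplace_cdf_def)
qed (simp add: laplace_cdf_def)

lemma laplace_cdf_reflect: "laplace_cdf s + laplace_cdf (-s) = 1"
  by (cases "s > 0"; cases "s = 0") (auto simp: laplace_cdf_def)

lemma ennreal_half: "0 \<le> x \<Longrightarrow> ennreal (x / 2) = inverse 2 * ennreal x"
  by (simp add: divide_ennreal[symmetric] divide_ennreal_def mult.commute)

lemma ennreal_mult_add:
  "0 \<le> a \<Longrightarrow> 0 \<le> b \<Longrightarrow> 0 \<le> c \<Longrightarrow> ennreal a * (ennreal b + ennreal c) = ennreal (a * (b + c))"
  by (simp add: ennreal_mult ennreal_plus)

lemma laplace_cdf_integral:
  "(\<integral>\<^sup>+l. ennreal (laplace_density l) * indicator {..s} l \<partial>lborel) = ennreal (laplace_cdf s)"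
proof (cases "0 \<le> s")
  case True
  have left: "(\<integral>\<^sup>+l. ennreal (exp (1*l+0)) * indicator {..<0} l \<partial>lborel) = ennreal (exp (1*0+0) / 1)"
    by (rule nn_integral_exp_Iic_ae) auto
  have right: "(\<integral>\<^sup>+l. ennreal (exp ((-1)*l+0)) * indicator {0..s} l \<partial>lborel)
      = ennreal ((exp ((-1) * s + 0) - exp ((-1)*0+0)) / (-1))"
    using True by (intro nn_integral_exp_Icc_ae) auto
  have "(\<integral>\<^sup>+l. ennreal (laplace_density l) * indicator {..s} l \<partial>lborel) =
     (\<integral>\<^sup>+l. ennreal (1/2) * (ennreal (exp (1*l+0)) * indicator {..<0} l
        + ennreal (exp ((-1)*l+0)) * indicator {0..s} l) \<partial>lborel)"
    using True by (intro nn_integral_cong) (auto simp: laplace_density_def indicator_def ennreal_half)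
  also have "\<dots> = ennreal (1/2) * ((\<integral>\<^sup>+l. ennreal (exp (1*l+0)) * indicator {..<0} l \<partial>lborel)
        + (\<integral>\<^sup>+l. ennreal (exp ((-1)*l+0)) * indicator {0..s} l \<partial>lborel))"
    by (simp add: nn_integral_cmult nn_integral_add)
  also have "\<dots> = ennreal (1/2) * (ennreal 1 + ennreal (1 - exp (-s)))"
    unfolding left right by simp
  also have "\<dots> = ennreal (laplace_cdf s)"
    using True by (subst ennreal_mult_add) (auto simp: laplace_cdf_def field_simps)
  finally show ?thesis .
next
  case False
  have "(\<integral>\<^sup>+l. ennreal (laplace_density l) * indicator {..s} l \<partial>lborel) =
     (\<integral>\<^sup>+l. ennreal (1/2) * (ennreal (exp (1*l+0)) * indicator {..s} l) \<partial>lborel)"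
    using False by (intro nn_integral_cong) (auto simp: laplace_density_def indicator_def ennreal_half)
  also have "\<dots> = ennreal (1/2) * ennreal (exp (1 * s + 0) / 1)"
    using nn_integral_exp_Iic[of 1 0 s] by (simp add: nn_integral_cmult)
  also have "\<dots> = ennreal (laplace_cdf s)"
    using False by (simp add: laplace_cdf_def ennreal_half)
  finally show ?thesis .
qed

text \<open>The two integrals of the Laplace density needed for the contraction estimate.\<close>

lemma laplace_density_weighted_integral:
  fixes c :: real
  assumes "0 < c"
  shows "integrable lborel (\<lambda>l. laplace_density l * exp (- (c - 1) * \<bar>l\<bar>))"
    and "(\<integral>l. laplace_density l * exp (- (c - 1) * \<bar>l\<bar>) \<partial>lborel) = 1 / c"
proof -
  have eq: "laplace_density l * exp (- (c - 1) * \<bar>l\<bar>) = exp (- c * \<bar>l\<bar>) / 2" for l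
    by (simp add: laplace_density_def mult_exp_exp algebra_simps)
  have "(\<integral>\<^sup>+l. ennreal (laplace_density l * exp (- (c - 1) * \<bar>l\<bar>)) \<partial>lborel)
      = (\<integral>\<^sup>+l. ennreal (1/2) * ennreal (exp (- (c * \<bar>l\<bar>))) \<partial>lborel)"
    unfolding eq by (intro nn_integral_cong) (simp add: ennreal_half)
  also have "\<dots> = ennreal (1/2) * ennreal (2 / c)"
    using assms by (subst nn_integral_cmult) (simp_all add: nn_integral_exp_abs)
  also have "\<dots> = ennreal (1 / c)"
    using assms by (subst ennreal_mult[symmetric]) auto
  finally have nn: "(\<integral>\<^sup>+l. ennreal (laplace_density l * exp (- (c - 1) * \<bar>l\<bar>)) \<partial>lborel) = ennreal (1 / c)" .
  show "integrable lborel (\<lambda>l. laplace_density l * exp (- (c - 1) * \<bar>l\<bar>))"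
    using nn by (intro integrableI_nonneg) (auto simp: laplace_density_nonneg)
  show "(\<integral>l. laplace_density l * exp (- (c - 1) * \<bar>l\<bar>) \<partial>lborel) = 1 / c"
    using assms nn by (subst integral_eq_nn_integral) (auto simp: laplace_density_nonneg)
qed

lemma laplace_density_integrable: "integrable lborel laplace_density"
  using laplace_density_weighted_integral(1)[of 1] by simp

lemma laplace_density_integral: "(\<integral>l. laplace_density l \<partial>lborel) = 1"
  using laplace_density_weighted_integral(2)[of 1] by simp

lemma laplace_convolution_integrable:
  assumes [measurable]: "h \<in> borel_measurable borel" and "\<And>x. \<bar>h x\<bar> \<le> B"
  shows "integrable lborel (\<lambda>l. laplace_density l * h (t - l))"
proof (rule Bochner_Integration.integrable_bound[OF integrable_mult_left[OF laplace_density_integrable, of B]])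
  show "AE x in lborel. norm (laplace_density x * h (t - x)) \<le> norm (laplace_density x * B)"
    using assms(2)[of "t - _"] laplace_density_nonneg
    by (auto simp: abs_mult intro!: mult_left_mono order.trans[OF _ abs_ge_self])
qed measurable

text \<open>P(Y \<le> s + X) for independent X, Y ~ Exp(1): the Laplace law is the law of Y - X.\<close>

lemma laplace_cdf_as_Exp1_integral:
  "(\<integral>\<^sup>+x. ennreal (exp_cdf (s + x)) \<partial>Exp1) = ennreal (laplace_cdf s)"
proof -
  define c where "c = max 0 (-s)"
  have "(\<integral>\<^sup>+x. ennreal (exp_cdf (s + x)) \<partial>Exp1)
     = (\<integral>\<^sup>+x. ennreal (exponential_density 1 x) * ennreal (exp_cdf (s + x)) \<partial>lborel)"
    by (rule nn_integral_Exp1) (unfold exp_cdf_def, measurable)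
  also have "\<dots> = (\<integral>\<^sup>+x. ennreal (exp (-x) - exp (-s-2*x)) * indicator {c..} x \<partial>lborel)"
  proof (intro nn_integral_cong)
    fix x :: real
    show "ennreal (exponential_density 1 x) * ennreal (exp_cdf (s + x)) =
          ennreal (exp (-x) - exp (-s-2*x)) * indicator {c..} x"
    proof (cases "c \<le> x")
      case True
      then have "0 \<le> x" "0 \<le> s + x" by (auto simp: c_def)
      moreover have "exp (-x) * (1 - exp (-(s+x))) = exp (-x) - exp (-s-2*x)"
        by (simp add: algebra_simps flip: exp_add)
      ultimately show ?thesis using True
        by (simp add: exponential_density_def exp_cdf_def ennreal_mult[symmetric])
    next
      case False
      then show ?thesis by (auto simp: c_def exponential_density_def exp_cdf_def)
    qed
  qed
  also have "\<dots> = ennreal (0 - (- exp (-c) + exp (-s-2*c)/2))"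
  proof (rule nn_integral_FTC_atLeast)
    show "((\<lambda>x. - exp (-x) + exp (-s-2*x)/2) \<longlongrightarrow> 0) at_top"
      by real_asymp
    fix x assume "c \<le> x"
    then have "-s-2*x \<le> -x" by (auto simp: c_def)
    then show "0 \<le> exp (-x) - exp (-s-2*x)" by simp
    show "((\<lambda>x. - exp (-x) + exp (-s-2*x)/2) has_real_derivative exp (-x) - exp (-s-2*x)) (at x)"
      by (auto intro!: derivative_eq_intros)
  qed measurable
  also have "\<dots> = ennreal (laplace_cdf s)"
  proof (cases "0 \<le> s")
    case True then show ?thesis by (simp add: c_def laplace_cdf_def)
  next
    case False
    then have cs: "c = -s" by (simp add: c_def)
    have "-s-2*c = s" by (simp add: cs)
    then show ?thesis using False by (simp add: laplace_cdf_def cs)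
  qed
  finally show ?thesis .
qed

section \<open>The one-step distribution function\<close>

definition step_cdf :: "real \<Rightarrow> real \<Rightarrow> real" where
  "step_cdf d t = exp_cdf t + exp (- \<bar>t\<bar>) * laplace_cdf (t - d)"

definition step_density :: "real \<Rightarrow> real \<Rightarrow> real" where
  "step_density d x = (if 0 \<le> x then (if d \<le> x then exp (d - 2*x) else exp (-x))
                       else (if d \<le> x then exp x else exp (2*x - d)))"

lemma step_cdf_measurable[measurable]: "(\<lambda>d. step_cdf d t) \<in> borel_measurable borel"
  unfolding step_cdf_def by measurable

lemma step_density_measurable[measurable]:
  "(\<lambda>(d, x). step_density d x) \<in> borel_measurable (borel \<Otimes>\<^sub>M borel)"
  unfolding step_density_def by measurable

lemma step_cdf_nonneg: "0 \<le> step_cdf d t"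
  unfolding step_cdf_def using exp_cdf_nonneg laplace_cdf_nonneg by simp

lemma step_cdf_le_1: "step_cdf d t \<le> 1"
proof (cases "0 \<le> t")
  case True
  have "exp (-t) * laplace_cdf (t - d) \<le> exp (-t) * 1" by (intro mult_left_mono laplace_cdf_le_1) auto
  then show ?thesis using True by (simp add: step_cdf_def exp_cdf_def)
next
  case False
  have "exp t * laplace_cdf (t - d) \<le> 1 * 1"
    using False by (intro mult_mono laplace_cdf_le_1 laplace_cdf_nonneg) auto
  then show ?thesis using False by (simp add: step_cdf_def exp_cdf_def)
qed

lemma ennreal_step_cdf:
  "ennreal (step_cdf d t) = ennreal (exp_cdf t) + ennreal (exp (- \<bar>t\<bar>)) * ennreal (laplace_cdf (t - d))"
  using exp_cdf_nonneg[of t] laplace_cdf_nonneg[of "t - d"] unfolding step_cdf_def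
  by (simp add: ennreal_mult ennreal_plus)

lemma step_density_le_1: "step_density d x \<le> 1"
  by (auto simp: step_density_def)

text \<open>Reflection symmetry of the step: it is what makes the stationary law symmetric.\<close>

lemma step_cdf_reflect: "step_cdf (-d) t = 1 - step_cdf d (-t)"
proof -
  have reflect: "- t - d = - (d + t)" by simp
  have "laplace_cdf (d + t) + laplace_cdf (- t - d) = 1"
    unfolding reflect by (rule laplace_cdf_reflect)
  then have "exp (-t) * laplace_cdf (d+t) + exp (-t) * laplace_cdf (-t-d) = exp (-t)"
       and "exp t * laplace_cdf (d+t) + exp t * laplace_cdf (-t-d) = exp t"
    by (metis distrib_left mult_1_right)+
  then show ?thesis unfolding step_cdf_def exp_cdf_def
    by (cases "t > 0"; cases "t = 0") (auto simp: algebra_simps)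
qed

lemma step_density_reflect: "x \<noteq> 0 \<Longrightarrow> step_density (-d) (-x) = step_density d x"
  by (auto simp: step_density_def)

lemma ladder_step_clamp: "0 \<le> z \<Longrightarrow> ladder_step d x y z = max (-z) (min (d+y-x) z)"
  by (auto simp: ladder_step_def min_def max_def)

lemma step_prob_given_xy:
  "emeasure Exp1 {z. ladder_step d x y z \<le> t}
     = ennreal (exp_cdf t + exp (- \<bar>t\<bar>) * (if d+y-x \<le> t then 1 else 0))"
proof -
  have meas: "{z. ladder_step d x y z \<le> t} \<in> sets borel"
    unfolding ladder_step_def by measurable
  have "emeasure Exp1 {z. ladder_step d x y z \<le> t}
     = (\<integral>\<^sup>+z. ennreal (exponential_density 1 z) * indicator {z. ladder_step d x y z \<le> t} z \<partial>lborel)"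
    unfolding Exp1_def using meas by (subst emeasure_density) auto
  also have "\<dots> = ennreal (exp_cdf t + exp (- \<bar>t\<bar>) * (if d+y-x \<le> t then 1 else 0))"
  proof (cases "d+y-x \<le> t")
    case True
    have "(\<integral>\<^sup>+z. ennreal (exponential_density 1 z) * indicator {z. ladder_step d x y z \<le> t} z \<partial>lborel)
       = (\<integral>\<^sup>+z. ennreal (exp ((-1)*z+0)) * indicator {max 0 (-t)..} z \<partial>lborel)"
      using True by (intro nn_integral_cong)
        (auto simp: exponential_density_def indicator_def ladder_step_clamp)
    also have "\<dots> = ennreal (- exp ((-1)*(max 0 (-t))+0) / (-1))"
      by (rule nn_integral_exp_Ici) auto
    finally show ?thesis
      using True by (auto simp: exp_cdf_def max_def abs_if simp del: ennreal_plus)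
  next
    case False
    show ?thesis
    proof (cases "0 \<le> t")
      case True
      have "(\<integral>\<^sup>+z. ennreal (exponential_density 1 z) * indicator {z. ladder_step d x y z \<le> t} z \<partial>lborel)
         = (\<integral>\<^sup>+z. ennreal (exp ((-1)*z+0)) * indicator {0..t} z \<partial>lborel)"
        using True False by (intro nn_integral_cong)
          (auto simp: exponential_density_def indicator_def ladder_step_clamp)
      also have "\<dots> = ennreal ((exp ((-1)*t+0) - exp ((-1)*0+0)) / (-1))"
        using True by (intro nn_integral_exp_Icc) auto
      finally show ?thesis
        using True False by (auto simp: exp_cdf_def simp del: ennreal_plus)
    next
      case f2: False
      have "(\<lambda>z. ennreal (exponential_density 1 z) * indicator {z. ladder_step d x y z \<le> t} z) = (\<lambda>z. 0)"
        using f2 False by (intro ext) (auto simp: exponential_density_def indicator_def ladder_step_clamp)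
      then show ?thesis using f2 False by (simp add: exp_cdf_def)
    qed
  qed
  finally show ?thesis .
qed

text \<open>Averaging over X and Y turns the jump indicator into laplace_cdf (t - d).\<close>

lemma step_prob_given_x_integral:
  "(\<integral>\<^sup>+x. \<integral>\<^sup>+y. ennreal (exp_cdf t + exp (- \<bar>t\<bar>) * (if d+y-x \<le> t then 1 else 0)) \<partial>Exp1 \<partial>Exp1)
    = ennreal (step_cdf d t)"
proof -
  have inner: "(\<integral>\<^sup>+y. ennreal (exp_cdf t + exp (- \<bar>t\<bar>) * (if d+y-x \<le> t then 1 else 0)) \<partial>Exp1)
     = ennreal (exp_cdf t) + ennreal (exp (- \<bar>t\<bar>)) * ennreal (exp_cdf ((t-d) + x))"
    for x
  proof -
    have "(\<integral>\<^sup>+y. ennreal (exp_cdf t + exp (- \<bar>t\<bar>) * (if d+y-x \<le> t then 1 else 0)) \<partial>Exp1)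
       = (\<integral>\<^sup>+y. ennreal (exp_cdf t) + ennreal (exp (- \<bar>t\<bar>)) * indicator {..(t-d)+x} y \<partial>Exp1)"
      using exp_cdf_nonneg[of t] by (intro nn_integral_cong) (auto simp: indicator_def)
    also have "\<dots> = ennreal (exp_cdf t) + ennreal (exp (- \<bar>t\<bar>)) * emeasure Exp1 {..(t-d)+x}"
      by (simp add: nn_integral_add nn_integral_cmult)
    finally show ?thesis by (simp only: emeasure_Exp1_atMost)
  qed
  have "(\<integral>\<^sup>+x. \<integral>\<^sup>+y. ennreal (exp_cdf t + exp (- \<bar>t\<bar>) * (if d+y-x \<le> t then 1 else 0)) \<partial>Exp1 \<partial>Exp1)
    = (\<integral>\<^sup>+x. ennreal (exp_cdf t) + ennreal (exp (- \<bar>t\<bar>)) * ennreal (exp_cdf ((t-d) + x)) \<partial>Exp1)"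
    by (simp only: inner)
  also have "\<dots> = ennreal (exp_cdf t) + ennreal (exp (- \<bar>t\<bar>)) * (\<integral>\<^sup>+x. ennreal (exp_cdf ((t-d) + x)) \<partial>Exp1)"
    by (simp add: nn_integral_add nn_integral_cmult exp_cdf_def del: ennreal_plus)
  also have "\<dots> = ennreal (step_cdf d t)"
    by (simp only: laplace_cdf_as_Exp1_integral ennreal_step_cdf)
  finally show ?thesis .
qed

lemma measurable_le_set:
  assumes "g \<in> borel_measurable N" "space N = UNIV"
  shows "{w. g w \<le> (t::real)} \<in> sets N"
proof -
  have "{w. g w \<le> t} = g -` {..t} \<inter> space N" using assms(2) by auto
  then show ?thesis using measurable_sets[OF assms(1), of "{..t}"] by simp
qed

lemma prob_space_Exp1_Exp1: "prob_space (Exp1 \<Otimes>\<^sub>M Exp1)"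
  by (intro prob_space_pair prob_space_Exp1)

lemma prob_space_Exp1_cube: "prob_space (Exp1 \<Otimes>\<^sub>M (Exp1 \<Otimes>\<^sub>M Exp1))"
  by (intro prob_space_pair prob_space_Exp1 prob_space_Exp1_Exp1)

lemma ladder_step_cdf:
  "emeasure (Exp1 \<Otimes>\<^sub>M (Exp1 \<Otimes>\<^sub>M Exp1)) {w. ladder_step d (fst w) (fst (snd w)) (snd (snd w)) \<le> t}
   = ennreal (step_cdf d t)"
proof -
  interpret EE: sigma_finite_measure "Exp1 \<Otimes>\<^sub>M Exp1"
    using prob_space_Exp1_Exp1 by (simp add: prob_space_imp_sigma_finite)
  interpret E: sigma_finite_measure Exp1
    using prob_space_Exp1 by (simp add: prob_space_imp_sigma_finite)
  have section_yz: "emeasure (Exp1 \<Otimes>\<^sub>M Exp1) (Pair x -` {w. ladder_step d (fst w) (fst (snd w)) (snd (snd w)) \<le> t})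
       = (\<integral>\<^sup>+y. emeasure Exp1 {z. ladder_step d x y z \<le> t} \<partial>Exp1)" for x
  proof -
    have "emeasure (Exp1 \<Otimes>\<^sub>M Exp1) (Pair x -` {w. ladder_step d (fst w) (fst (snd w)) (snd (snd w)) \<le> t})
       = emeasure (Exp1 \<Otimes>\<^sub>M Exp1) {v. ladder_step d x (fst v) (snd v) \<le> t}"
      by (auto intro!: arg_cong[where f="emeasure _"])
    also have "\<dots> = (\<integral>\<^sup>+y. emeasure Exp1 (Pair y -` {v. ladder_step d x (fst v) (snd v) \<le> t}) \<partial>Exp1)"
      by (rule E.emeasure_pair_measure_alt, rule measurable_le_set)
         (unfold ladder_step_def, measurable, simp add: space_pair_measure)
    also have "\<dots> = (\<integral>\<^sup>+y. emeasure Exp1 {z. ladder_step d x y z \<le> t} \<partial>Exp1)"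
      by (auto intro!: nn_integral_cong arg_cong[where f="emeasure _"])
    finally show ?thesis .
  qed
  have "emeasure (Exp1 \<Otimes>\<^sub>M (Exp1 \<Otimes>\<^sub>M Exp1)) {w. ladder_step d (fst w) (fst (snd w)) (snd (snd w)) \<le> t}
     = (\<integral>\<^sup>+x. emeasure (Exp1 \<Otimes>\<^sub>M Exp1) (Pair x -` {w. ladder_step d (fst w) (fst (snd w)) (snd (snd w)) \<le> t}) \<partial>Exp1)"
    by (rule EE.emeasure_pair_measure_alt, rule measurable_le_set)
       (unfold ladder_step_def, measurable, simp add: space_pair_measure)
  also have "\<dots> = (\<integral>\<^sup>+x. \<integral>\<^sup>+y. emeasure Exp1 {z. ladder_step d x y z \<le> t} \<partial>Exp1 \<partial>Exp1)"
    by (simp only: section_yz)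
  also have "\<dots> = ennreal (step_cdf d t)"
    by (simp only: step_prob_given_xy step_prob_given_x_integral)
  finally show ?thesis .
qed

lemma ennreal_add2: "0 \<le> a \<Longrightarrow> 0 \<le> b \<Longrightarrow> a + b = c \<Longrightarrow> ennreal a + ennreal b = ennreal c"
  by (simp add: ennreal_plus[symmetric] del: ennreal_plus)

lemma ennreal_add3:
  "0 \<le> a \<Longrightarrow> 0 \<le> b \<Longrightarrow> 0 \<le> e \<Longrightarrow> a + b + e = c \<Longrightarrow> ennreal a + ennreal b + ennreal e = ennreal c"
  by (simp add: ennreal_plus[symmetric] del: ennreal_plus)

text \<open>step_density d is the density of step_cdf d: the piecewise exponential density is
  integrated over (-\<infinity>, t], according to the relative position of d, t and 0.\<close>

lemma step_density_cdf_neg: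
  assumes "t < 0"
  shows "(\<integral>\<^sup>+x. ennreal (step_density d x) * indicator {..t} x \<partial>lborel) = ennreal (step_cdf d t)"
proof -
  consider (A) "t < d" | (B) "d \<le> t" by linarith
  then show ?thesis
  proof cases
    case A
    have "(\<integral>\<^sup>+x. ennreal (step_density d x) * indicator {..t} x \<partial>lborel)
        = (\<integral>\<^sup>+x. ennreal (exp (2*x+(-d))) * indicator {..t} x \<partial>lborel)"
      using A assms by (intro nn_integral_cong) (auto simp: step_density_def indicator_def)
    also have "\<dots> = ennreal (exp (2*t+(-d)) / 2)" by (rule nn_integral_exp_Iic) simp
    also have "\<dots> = ennreal (step_cdf d t)"
      using A assms by (simp add: step_cdf_def exp_cdf_def laplace_cdf_def exp_add[symmetric] exp_diff)
    finally show ?thesis .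
  next
    case B
    have p1: "(\<integral>\<^sup>+x. ennreal (exp (2*x+(-d))) * indicator {..<d} x \<partial>lborel) = ennreal (exp (2*d+(-d)) / 2)"
      by (rule nn_integral_exp_Iic_ae) auto
    have p2: "(\<integral>\<^sup>+x. ennreal (exp (1*x+0)) * indicator {d..t} x \<partial>lborel) = ennreal ((exp (1*t+0) - exp (1*d+0)) / 1)"
      using B assms by (intro nn_integral_exp_Icc_ae) auto
    have "(\<integral>\<^sup>+x. ennreal (step_density d x) * indicator {..t} x \<partial>lborel)
        = (\<integral>\<^sup>+x. ennreal (exp (2*x+(-d))) * indicator {..<d} x
             + ennreal (exp (1*x+0)) * indicator {d..t} x \<partial>lborel)"
      using B assms by (intro nn_integral_cong) (auto simp: step_density_def indicator_def)
    also have "\<dots> = (\<integral>\<^sup>+x. ennreal (exp (2*x+(-d))) * indicator {..<d} x \<partial>lborel)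
             + (\<integral>\<^sup>+x. ennreal (exp (1*x+0)) * indicator {d..t} x \<partial>lborel)"
      by (rule nn_integral_add) auto
    also have "\<dots> = ennreal (step_cdf d t)"
      unfolding p1 p2 using B assms
      by (intro ennreal_add2)
         (simp_all add: step_cdf_def exp_cdf_def laplace_cdf_def algebra_simps mult_exp_exp,
          (simp add: field_simps)?)
    finally show ?thesis .
  qed
qed

lemma step_density_cdf_nonneg_start:
  assumes "d \<le> 0" "0 \<le> t"
  shows "(\<integral>\<^sup>+x. ennreal (step_density d x) * indicator {..t} x \<partial>lborel) = ennreal (step_cdf d t)"
proof -
  have p1: "(\<integral>\<^sup>+x. ennreal (exp (2*x+(-d))) * indicator {..<d} x \<partial>lborel) = ennreal (exp (2*d+(-d)) / 2)"
    by (rule nn_integral_exp_Iic_ae) auto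
  have p2: "(\<integral>\<^sup>+x. ennreal (exp (1*x+0)) * indicator {d..<0} x \<partial>lborel) = ennreal ((exp (1*0+0) - exp (1*d+0)) / 1)"
    using assms by (intro nn_integral_exp_Icc_ae) auto
  have p3: "(\<integral>\<^sup>+x. ennreal (exp ((-2)*x+d)) * indicator {0..t} x \<partial>lborel) = ennreal ((exp ((-2)*t+d) - exp ((-2)*0+d)) / (-2))"
    using assms by (intro nn_integral_exp_Icc_ae) auto
  have "(\<integral>\<^sup>+x. ennreal (step_density d x) * indicator {..t} x \<partial>lborel)
      = (\<integral>\<^sup>+x. ennreal (exp (2*x+(-d))) * indicator {..<d} x
           + ennreal (exp (1*x+0)) * indicator {d..<0} x
           + ennreal (exp ((-2)*x+d)) * indicator {0..t} x \<partial>lborel)"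
    using assms by (intro nn_integral_cong) (auto simp: step_density_def indicator_def)
  also have "\<dots> = (\<integral>\<^sup>+x. ennreal (exp (2*x+(-d))) * indicator {..<d} x \<partial>lborel)
           + (\<integral>\<^sup>+x. ennreal (exp (1*x+0)) * indicator {d..<0} x \<partial>lborel)
           + (\<integral>\<^sup>+x. ennreal (exp ((-2)*x+d)) * indicator {0..t} x \<partial>lborel)"
    by (subst nn_integral_add, simp, simp, subst nn_integral_add, simp_all)
  also have "\<dots> = ennreal (step_cdf d t)"
    unfolding p1 p2 p3 using assms
    by (intro ennreal_add3)
       (simp_all add: step_cdf_def exp_cdf_def laplace_cdf_def algebra_simps mult_exp_exp,
        (simp add: field_simps)?)
  finally show ?thesis .
qed

lemma step_density_cdf_pos_start:
  assumes "0 < d" "0 \<le> t"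
  shows "(\<integral>\<^sup>+x. ennreal (step_density d x) * indicator {..t} x \<partial>lborel) = ennreal (step_cdf d t)"
proof -
  consider (E) "t < d" | (F) "d \<le> t" by linarith
  then show ?thesis
  proof cases
    case E
    have p1: "(\<integral>\<^sup>+x. ennreal (exp (2*x+(-d))) * indicator {..<0} x \<partial>lborel) = ennreal (exp (2*0+(-d)) / 2)"
      by (rule nn_integral_exp_Iic_ae) auto
    have p2: "(\<integral>\<^sup>+x. ennreal (exp ((-1)*x+0)) * indicator {0..t} x \<partial>lborel) = ennreal ((exp ((-1)*t+0) - exp ((-1)*0+0)) / (-1))"
      using E assms by (intro nn_integral_exp_Icc_ae) auto
    have "(\<integral>\<^sup>+x. ennreal (step_density d x) * indicator {..t} x \<partial>lborel)
        = (\<integral>\<^sup>+x. ennreal (exp (2*x+(-d))) * indicator {..<0} x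
             + ennreal (exp ((-1)*x+0)) * indicator {0..t} x \<partial>lborel)"
      using E assms by (intro nn_integral_cong) (auto simp: step_density_def indicator_def)
    also have "\<dots> = (\<integral>\<^sup>+x. ennreal (exp (2*x+(-d))) * indicator {..<0} x \<partial>lborel)
             + (\<integral>\<^sup>+x. ennreal (exp ((-1)*x+0)) * indicator {0..t} x \<partial>lborel)"
      by (rule nn_integral_add) auto
    also have "\<dots> = ennreal (step_cdf d t)"
      unfolding p1 p2 using E assms
      by (intro ennreal_add2)
         (simp_all add: step_cdf_def exp_cdf_def laplace_cdf_def algebra_simps mult_exp_exp,
          (simp add: field_simps)?)
    finally show ?thesis .
  next
    case F
    have p1: "(\<integral>\<^sup>+x. ennreal (exp (2*x+(-d))) * indicator {..<0} x \<partial>lborel) = ennreal (exp (2*0+(-d)) / 2)"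
      by (rule nn_integral_exp_Iic_ae) auto
    have p2: "(\<integral>\<^sup>+x. ennreal (exp ((-1)*x+0)) * indicator {0..<d} x \<partial>lborel) = ennreal ((exp ((-1)*d+0) - exp ((-1)*0+0)) / (-1))"
      using F assms by (intro nn_integral_exp_Icc_ae) auto
    have p3: "(\<integral>\<^sup>+x. ennreal (exp ((-2)*x+d)) * indicator {d..t} x \<partial>lborel) = ennreal ((exp ((-2)*t+d) - exp ((-2)*d+d)) / (-2))"
      using F assms by (intro nn_integral_exp_Icc_ae) auto
    have "(\<integral>\<^sup>+x. ennreal (step_density d x) * indicator {..t} x \<partial>lborel)
        = (\<integral>\<^sup>+x. ennreal (exp (2*x+(-d))) * indicator {..<0} x
             + ennreal (exp ((-1)*x+0)) * indicator {0..<d} x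
             + ennreal (exp ((-2)*x+d)) * indicator {d..t} x \<partial>lborel)"
      using F assms by (intro nn_integral_cong) (auto simp: step_density_def indicator_def)
    also have "\<dots> = (\<integral>\<^sup>+x. ennreal (exp (2*x+(-d))) * indicator {..<0} x \<partial>lborel)
             + (\<integral>\<^sup>+x. ennreal (exp ((-1)*x+0)) * indicator {0..<d} x \<partial>lborel)
             + (\<integral>\<^sup>+x. ennreal (exp ((-2)*x+d)) * indicator {d..t} x \<partial>lborel)"
      by (subst nn_integral_add, simp, simp, subst nn_integral_add, simp_all)
    also have "\<dots> = ennreal (step_cdf d t)"
      unfolding p1 p2 p3 using F assms
      by (intro ennreal_add3)
         (simp_all add: step_cdf_def exp_cdf_def laplace_cdf_def algebra_simps mult_exp_exp,
          (simp add: field_simps)?)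
    finally show ?thesis .
  qed
qed

lemma step_density_cdf:
  "(\<integral>\<^sup>+x. ennreal (step_density d x) * indicator {..t} x \<partial>lborel) = ennreal (step_cdf d t)"
  using step_density_cdf_neg step_density_cdf_nonneg_start step_density_cdf_pos_start
  by (cases "t < 0"; cases "d \<le> 0") auto

section \<open>Stationary laws\<close>

lemma stationary_cdf_fixed_point:
  assumes "ladder_stationary M"
  shows "emeasure M {..t} = (\<integral>\<^sup>+d. ennreal (step_cdf d t) \<partial>M)"
proof -
  let ?P = "M \<Otimes>\<^sub>M (Exp1 \<Otimes>\<^sub>M (Exp1 \<Otimes>\<^sub>M Exp1))"
  let ?f = "\<lambda>(\<delta>, x, y, z). ladder_step \<delta> x y z"
  have S[measurable_cong]: "sets M = sets borel" and D: "distr ?P borel ?f = M"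
    using assms unfolding ladder_stationary_def by auto
  interpret P3: sigma_finite_measure "Exp1 \<Otimes>\<^sub>M (Exp1 \<Otimes>\<^sub>M Exp1)"
    using prob_space_Exp1_cube by (simp add: prob_space_imp_sigma_finite)
  have sp: "space M = UNIV" using sets_eq_imp_space_eq[OF S] by simp
  have f: "?f \<in> borel_measurable ?P"
    unfolding ladder_step_def by measurable
  have "emeasure M {..t} = emeasure (distr ?P borel ?f) {..t}"
    by (simp add: D)
  also have "\<dots> = emeasure ?P (?f -` {..t} \<inter> space ?P)"
    by (rule emeasure_distr[OF f]) simp
  also have "\<dots> = (\<integral>\<^sup>+d. emeasure (Exp1 \<Otimes>\<^sub>M (Exp1 \<Otimes>\<^sub>M Exp1)) (Pair d -` (?f -` {..t} \<inter> space ?P)) \<partial>M)"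
    by (rule P3.emeasure_pair_measure_alt) (use f in measurable)
  also have "\<dots> = (\<integral>\<^sup>+d. emeasure (Exp1 \<Otimes>\<^sub>M (Exp1 \<Otimes>\<^sub>M Exp1))
                    {w. ladder_step d (fst w) (fst (snd w)) (snd (snd w)) \<le> t} \<partial>M)"
    by (auto intro!: nn_integral_cong arg_cong[where f="emeasure _"] simp: space_pair_measure sp)
  also have "\<dots> = (\<integral>\<^sup>+d. ennreal (step_cdf d t) \<partial>M)"
    by (simp only: ladder_step_cdf)
  finally show ?thesis .
qed

definition stationary_density :: "real measure \<Rightarrow> real \<Rightarrow> real" where
  "stationary_density M x = enn2real (\<integral>\<^sup>+d. ennreal (step_density d x) \<partial>M)"

lemma step_density_mixture_measurable:
  assumes "prob_space M" "sets M = sets borel"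
  shows "(\<lambda>x. \<integral>\<^sup>+d. ennreal (step_density d x) \<partial>M) \<in> borel_measurable borel"
proof -
  interpret M: prob_space M by (rule assms(1))
  have "(\<lambda>(x, d). ennreal (step_density d x)) \<in> borel_measurable (borel \<Otimes>\<^sub>M M)"
    using assms(2) by measurable
  then show ?thesis
    by (rule M.borel_measurable_nn_integral[where f="\<lambda>x d. ennreal (step_density d x)", simplified])
qed

text \<open>A stationary law has the density x \<mapsto> E[step_density Delta x]: both measures have the
  same distribution function by Fubini, and half-lines generate the Borel sets.\<close>

lemma stationary_law_density:
  assumes st: "ladder_stationary M"
  shows "M = density lborel (\<lambda>x. \<integral>\<^sup>+d. ennreal (step_density d x) \<partial>M)"
proof -
  have P: "prob_space M" and S[measurable_cong]: "sets M = sets borel"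
    using st unfolding ladder_stationary_def by auto
  interpret M: prob_space M by (rule P)
  interpret PS: pair_sigma_finite M lborel
    by unfold_locales
  have [measurable]: "(\<lambda>x. \<integral>\<^sup>+d. ennreal (step_density d x) \<partial>M) \<in> borel_measurable borel"
    by (rule step_density_mixture_measurable[OF P S])
  show ?thesis
  proof (rule measure_eqI_generator_eq[where \<Omega>=UNIV and E="range atMost" and A="\<lambda>i. {..real i}"])
    show "Int_stable (range atMost :: real set set)"
      by (auto simp: Int_stable_def)
    show "range atMost \<subseteq> Pow (UNIV :: real set)" by auto
    show "sets M = sigma_sets UNIV (range atMost)"
      using S borel_eq_atMost[where 'a=real] by (metis sets_measure_of top_greatest Pow_UNIV)
    show "sets (density lborel (\<lambda>x. \<integral>\<^sup>+d. ennreal (step_density d x) \<partial>M)) = sigma_sets UNIV (range atMost)"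
      using borel_eq_atMost[where 'a=real] by (metis sets_lborel sets_density sets_measure_of top_greatest Pow_UNIV)
    show "range (\<lambda>i. {..real i}) \<subseteq> range atMost" by auto
    show "(\<Union>i. {..real i}) = UNIV"
      by (auto intro: real_arch_simple)
    show "emeasure M {..real i} \<noteq> \<infinity>" for i by simp
    fix X assume "X \<in> range (atMost :: real \<Rightarrow> real set)"
    then obtain t where X: "X = {..t}" by auto
    have "emeasure (density lborel (\<lambda>x. \<integral>\<^sup>+d. ennreal (step_density d x) \<partial>M)) {..t}
        = (\<integral>\<^sup>+x. (\<integral>\<^sup>+d. ennreal (step_density d x) \<partial>M) * indicator {..t} x \<partial>lborel)"
      by (rule emeasure_density) auto
    also have "\<dots> = (\<integral>\<^sup>+x. \<integral>\<^sup>+d. ennreal (step_density d x) * indicator {..t} x \<partial>M \<partial>lborel)"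
      by (simp add: nn_integral_multc)
    also have "\<dots> = (\<integral>\<^sup>+d. \<integral>\<^sup>+x. ennreal (step_density d x) * indicator {..t} x \<partial>lborel \<partial>M)"
      by (rule PS.Fubini') measurable
    also have "\<dots> = (\<integral>\<^sup>+d. ennreal (step_cdf d t) \<partial>M)"
      by (simp only: step_density_cdf)
    also have "\<dots> = emeasure M {..t}"
      by (rule stationary_cdf_fixed_point[OF st, symmetric])
    finally show "emeasure M X = emeasure (density lborel (\<lambda>x. \<integral>\<^sup>+d. ennreal (step_density d x) \<partial>M)) X"
      unfolding X by simp
  qed
qed

text \<open>The basic properties of the stationary density; it is bounded by 1 because the step
  density is, which makes the real-valued version exact.\<close>

lemma stationary_density:
  assumes st: "ladder_stationary M"
  shows stationary_density_measurable: "stationary_density M \<in> borel_measurable borel"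
    and stationary_density_nonneg: "0 \<le> stationary_density M x"
    and ennreal_stationary_density:
      "ennreal (stationary_density M x) = (\<integral>\<^sup>+d. ennreal (step_density d x) \<partial>M)"
    and stationary_density_density: "M = density lborel (\<lambda>x. ennreal (stationary_density M x))"
proof -
  have P: "prob_space M" and S[measurable_cong]: "sets M = sets borel"
    using st unfolding ladder_stationary_def by auto
  have bounded: "(\<integral>\<^sup>+d. ennreal (step_density d y) \<partial>M) \<le> 1" for y
  proof -
    have "(\<integral>\<^sup>+d. ennreal (step_density d y) \<partial>M) \<le> (\<integral>\<^sup>+d. ennreal 1 \<partial>M)"
      by (intro nn_integral_mono ennreal_leI step_density_le_1)
    then show ?thesis using prob_space.emeasure_space_1[OF P] by simp
  qed
  show ennreal: "ennreal (stationary_density M y) = (\<integral>\<^sup>+d. ennreal (step_density d y) \<partial>M)" for y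
    unfolding stationary_density_def using bounded[of y]
    by (intro ennreal_enn2real) (simp add: order_le_less_trans)
  show "stationary_density M \<in> borel_measurable borel"
    unfolding stationary_density_def using step_density_mixture_measurable[OF P S] by measurable
  show "0 \<le> stationary_density M x"
    by (simp add: stationary_density_def)
  show "M = density lborel (\<lambda>x. ennreal (stationary_density M x))"
    unfolding ennreal by (rule stationary_law_density[OF st])
qed

section \<open>The integral equations\<close>

lemma set_integral_density_weight:
  fixes M :: "real measure" and r g :: "real \<Rightarrow> real"
  assumes Mr: "M = density lborel (\<lambda>x. ennreal (r x))" and [measurable]: "r \<in> borel_measurable borel"
    and r0: "\<And>x. 0 \<le> r x" and [measurable]: "g \<in> borel_measurable borel" and g0: "\<And>x. 0 \<le> g x"
    and [measurable]: "S \<in> sets borel"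
  shows "(\<integral>\<delta>\<in>S. r \<delta> * g \<delta> \<partial>lborel) = enn2real (\<integral>\<^sup>+\<delta>. ennreal (g \<delta>) * indicator S \<delta> \<partial>M)"
proof -
  have "(\<integral>\<delta>\<in>S. r \<delta> * g \<delta> \<partial>lborel) = (\<integral>\<delta>. indicator S \<delta> * (r \<delta> * g \<delta>) \<partial>lborel)"
    by (simp add: set_lebesgue_integral_def)
  also have "\<dots> = enn2real (\<integral>\<^sup>+\<delta>. ennreal (indicator S \<delta> * (r \<delta> * g \<delta>)) \<partial>lborel)"
    using r0 g0 by (intro integral_eq_nn_integral) auto
  also have "(\<integral>\<^sup>+\<delta>. ennreal (indicator S \<delta> * (r \<delta> * g \<delta>)) \<partial>lborel)
     = (\<integral>\<^sup>+\<delta>. ennreal (r \<delta>) * (ennreal (g \<delta>) * indicator S \<delta>) \<partial>lborel)"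
    using r0 g0 by (intro nn_integral_cong) (auto simp: indicator_def ennreal_mult)
  also have "\<dots> = (\<integral>\<^sup>+\<delta>. ennreal (g \<delta>) * indicator S \<delta> \<partial>M)"
    unfolding Mr by (subst nn_integral_density) auto
  finally show ?thesis .
qed

lemma density_two_sided_equation:
  fixes M :: "real measure" and r g h :: "real \<Rightarrow> real"
  assumes Mr: "M = density lborel (\<lambda>x. ennreal (r x))" and [measurable]: "r \<in> borel_measurable borel"
    and r0: "\<And>x. 0 \<le> r x" and P: "prob_space M"
    and [measurable]: "g \<in> borel_measurable borel" "h \<in> borel_measurable borel"
    and g: "\<And>d. 0 \<le> g d" "\<And>d. d \<le> x \<Longrightarrow> g d \<le> B"
    and h: "\<And>d. 0 \<le> h d" "\<And>d. x \<le> d \<Longrightarrow> h d \<le> B"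
    and ab: "0 \<le> a" "0 \<le> b"
    and rx: "ennreal (r x) = (\<integral>\<^sup>+d. ennreal a * (ennreal (g d) * indicator {..x} d)
                                  + ennreal b * (ennreal (h d) * indicator {x..} d) \<partial>M)"
  shows "r x = a * (\<integral>\<delta>\<in>{..x}. r \<delta> * g \<delta> \<partial>lborel) + b * (\<integral>\<delta>\<in>{x..}. r \<delta> * h \<delta> \<partial>lborel)"
proof -
  interpret M: prob_space M by (rule P)
  have S[measurable_cong]: "sets M = sets borel" unfolding Mr by simp
  have finite: "(\<integral>\<^sup>+\<delta>. ennreal (f \<delta>) * indicator A \<delta> \<partial>M) < \<top>"
    if "\<And>d. d \<in> A \<Longrightarrow> f d \<le> B" for f :: "real \<Rightarrow> real" and A
  proof -
    have "(\<integral>\<^sup>+\<delta>. ennreal (f \<delta>) * indicator A \<delta> \<partial>M) \<le> (\<integral>\<^sup>+\<delta>. ennreal B \<partial>M)"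
      using that by (intro nn_integral_mono) (auto simp: indicator_def intro: ennreal_leI)
    also have "\<dots> < \<top>" by (simp add: M.emeasure_space_1)
    finally show ?thesis .
  qed
  have below: "(\<integral>\<^sup>+d. ennreal (g d) * indicator {..x} d \<partial>M) < \<top>"
    using g by (intro finite) auto
  have above: "(\<integral>\<^sup>+d. ennreal (h d) * indicator {x..} d \<partial>M) < \<top>"
    using h by (intro finite) auto
  have "ennreal (r x) = ennreal a * (\<integral>\<^sup>+d. ennreal (g d) * indicator {..x} d \<partial>M)
                      + ennreal b * (\<integral>\<^sup>+d. ennreal (h d) * indicator {x..} d \<partial>M)"
    unfolding rx by (simp add: nn_integral_add nn_integral_cmult)
  then have "r x = enn2real (ennreal a * (\<integral>\<^sup>+d. ennreal (g d) * indicator {..x} d \<partial>M)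
                      + ennreal b * (\<integral>\<^sup>+d. ennreal (h d) * indicator {x..} d \<partial>M))"
    using r0[of x] by (metis enn2real_ennreal)
  also have "\<dots> = a * enn2real (\<integral>\<^sup>+d. ennreal (g d) * indicator {..x} d \<partial>M)
                 + b * enn2real (\<integral>\<^sup>+d. ennreal (h d) * indicator {x..} d \<partial>M)"
    using below above ab by (simp add: enn2real_plus enn2real_mult ennreal_mult_less_top)
  also have "\<dots> = a * (\<integral>\<delta>\<in>{..x}. r \<delta> * g \<delta> \<partial>lborel) + b * (\<integral>\<delta>\<in>{x..}. r \<delta> * h \<delta> \<partial>lborel)"
    using g h r0 by (simp add: set_integral_density_weight[OF Mr])
  finally show ?thesis .
qed

lemma stationary_no_atoms:
  assumes "ladder_stationary M"
  shows "emeasure M {x} = 0" and "AE d in M. d \<noteq> x"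
proof -
  note M = stationary_density_density[OF assms]
  have [measurable]: "stationary_density M \<in> borel_measurable borel"
    by (rule stationary_density_measurable[OF assms])
  show "emeasure M {x} = 0"
    by (subst M, subst emeasure_density) (auto intro!: nn_integral_null_set)
  show "AE d in M. d \<noteq> x"
    by (subst M, subst AE_density) (auto intro: AE_mp[OF AE_lborel_singleton[of x]])
qed

text \<open>The integral equations: below 0 the kernel step_density d x is exp x for d \<le> x and
  exp (2x) exp (-d) for d \<ge> x; above 0 it is exp (-2x) exp d and exp (-x) respectively.\<close>

lemma stationary_density_equation_neg:
  assumes st: "ladder_stationary M" and x: "x < 0"
  shows "stationary_density M x = exp x * (\<integral>\<delta>\<in>{..x}. stationary_density M \<delta> \<partial>lborel)
           + exp (2 * x) * (\<integral>\<delta>\<in>{x..}. stationary_density M \<delta> * exp (- \<delta>) \<partial>lborel)"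
proof -
  have P: "prob_space M" using st unfolding ladder_stationary_def by simp
  have "ennreal (stationary_density M x) = (\<integral>\<^sup>+d. ennreal (exp x) * (ennreal 1 * indicator {..x} d)
             + ennreal (exp (2*x)) * (ennreal (exp (-d)) * indicator {x..} d) \<partial>M)"
    unfolding ennreal_stationary_density[OF st]
  proof (rule nn_integral_cong_AE)
    show "AE d in M. ennreal (step_density d x) = ennreal (exp x) * (ennreal 1 * indicator {..x} d)
             + ennreal (exp (2*x)) * (ennreal (exp (-d)) * indicator {x..} d)"
      using stationary_no_atoms(2)[OF st, of x]
      by eventually_elim (use x in \<open>auto simp: step_density_def indicator_def ennreal_mult[symmetric] mult_exp_exp\<close>)
  qed
  then have "stationary_density M x = exp x * (\<integral>\<delta>\<in>{..x}. stationary_density M \<delta> * 1 \<partial>lborel)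
           + exp (2 * x) * (\<integral>\<delta>\<in>{x..}. stationary_density M \<delta> * exp (- \<delta>) \<partial>lborel)"
    by (intro density_two_sided_equation[OF stationary_density_density[OF st]
          stationary_density_measurable[OF st] stationary_density_nonneg[OF st] P,
          where B="max 1 (exp (-x))"]) (auto simp: le_max_iff_disj)
  then show ?thesis by simp
qed

lemma stationary_density_equation_nonneg:
  assumes st: "ladder_stationary M" and x: "0 \<le> x"
  shows "stationary_density M x = exp (- 2 * x) * (\<integral>\<delta>\<in>{..x}. stationary_density M \<delta> * exp \<delta> \<partial>lborel)
           + exp (- x) * (\<integral>\<delta>\<in>{x..}. stationary_density M \<delta> \<partial>lborel)"
proof -
  have P: "prob_space M" using st unfolding ladder_stationary_def by simp
  have "ennreal (stationary_density M x) = (\<integral>\<^sup>+d. ennreal (exp (- 2 * x)) * (ennreal (exp d) * indicator {..x} d)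
             + ennreal (exp (- x)) * (ennreal 1 * indicator {x..} d) \<partial>M)"
    unfolding ennreal_stationary_density[OF st]
  proof (rule nn_integral_cong_AE)
    show "AE d in M. ennreal (step_density d x) = ennreal (exp (- 2 * x)) * (ennreal (exp d) * indicator {..x} d)
             + ennreal (exp (- x)) * (ennreal 1 * indicator {x..} d)"
      using stationary_no_atoms(2)[OF st, of x]
      by eventually_elim (use x in \<open>auto simp: step_density_def indicator_def ennreal_mult[symmetric] mult_exp_exp\<close>)
  qed
  then have "stationary_density M x = exp (- 2 * x) * (\<integral>\<delta>\<in>{..x}. stationary_density M \<delta> * exp \<delta> \<partial>lborel)
           + exp (- x) * (\<integral>\<delta>\<in>{x..}. stationary_density M \<delta> * 1 \<partial>lborel)"
    by (intro density_two_sided_equation[OF stationary_density_density[OF st]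
          stationary_density_measurable[OF st] stationary_density_nonneg[OF st] P,
          where B="max 1 (exp x)"]) (auto simp: le_max_iff_disj)
  then show ?thesis by simp
qed

section \<open>Symmetry of the stationary law\<close>

text \<open>The homogeneous renewal-type equation D = exp(-|t|) (laplace_density * D): a bounded
  solution decays like exp(-|t|), and feeding this decay back in halves its sup-bound.\<close>

lemma renewal_homogeneous_decay:
  fixes D :: "real \<Rightarrow> real"
  assumes [measurable]: "D \<in> borel_measurable borel"
    and D: "\<And>t. D t = exp (- \<bar>t\<bar>) * (\<integral>l. laplace_density l * D (t - l) \<partial>lborel)"
    and B: "\<And>x. \<bar>D x\<bar> \<le> B"
  shows "\<bar>D s\<bar> \<le> B * exp (- \<bar>s\<bar>)"
proof -
  have "\<bar>\<integral>l. laplace_density l * D (s - l) \<partial>lborel\<bar> \<le> (\<integral>l. laplace_density l * B \<partial>lborel)"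
    by (rule integral_abs_bound_integral[OF laplace_convolution_integrable[OF _ B]])
       (use B laplace_density_nonneg laplace_density_integrable
         in \<open>auto simp: abs_mult intro: mult_left_mono\<close>)
  also have "\<dots> = B" using laplace_density_integral by simp
  finally show ?thesis by (subst D) (simp add: abs_mult mult.commute mult_left_mono)
qed

lemma renewal_homogeneous_halving:
  fixes D :: "real \<Rightarrow> real"
  assumes [measurable]: "D \<in> borel_measurable borel"
    and D: "\<And>t. D t = exp (- \<bar>t\<bar>) * (\<integral>l. laplace_density l * D (t - l) \<partial>lborel)"
    and B: "\<And>x. \<bar>D x\<bar> \<le> B"
  shows "\<bar>D t\<bar> \<le> B / 2"
proof -
  have B0: "0 \<le> B" using B[of 0] by linarith
  note weight = laplace_density_weighted_integral[of 2, simplified]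
  have decay: "integrable lborel (\<lambda>l. laplace_density l * (B * exp (- \<bar>t - l\<bar>)))"
    by (rule laplace_convolution_integrable[where B=B and h="\<lambda>s. B * exp (- \<bar>s\<bar>)"])
       (use B0 in \<open>auto simp: abs_mult intro: mult_left_le\<close>)
  have "\<bar>D t\<bar> = exp (- \<bar>t\<bar>) * \<bar>\<integral>l. laplace_density l * D (t - l) \<partial>lborel\<bar>"
    by (subst D) (simp add: abs_mult)
  also have "\<dots> \<le> exp (- \<bar>t\<bar>) * (\<integral>l. laplace_density l * (B * exp (- \<bar>t - l\<bar>)) \<partial>lborel)"
    by (intro mult_left_mono integral_abs_bound_integral
          laplace_convolution_integrable[OF _ B] decay)
       (use renewal_homogeneous_decay[OF _ D B] laplace_density_nonneg
         in \<open>auto simp: abs_mult intro: mult_left_mono\<close>)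
  also have "\<dots> = (\<integral>l. exp (- \<bar>t\<bar>) * (laplace_density l * (B * exp (- \<bar>t - l\<bar>))) \<partial>lborel)"
    by simp
  also have "\<dots> \<le> (\<integral>l. B * (laplace_density l * exp (- \<bar>l\<bar>)) \<partial>lborel)"
  proof (rule integral_mono)
    show "integrable lborel (\<lambda>l. exp (- \<bar>t\<bar>) * (laplace_density l * (B * exp (- \<bar>t - l\<bar>))))"
      using decay by simp
    show "integrable lborel (\<lambda>l. B * (laplace_density l * exp (- \<bar>l\<bar>)))"
      using weight(1) by simp
    fix l :: real
    have "exp (- \<bar>t\<bar>) * exp (- \<bar>t - l\<bar>) \<le> exp (- \<bar>l\<bar>)"
      by (simp add: mult_exp_exp)
    then have "B * laplace_density l * (exp (- \<bar>t\<bar>) * exp (- \<bar>t - l\<bar>)) \<le> B * laplace_density l * exp (- \<bar>l\<bar>)"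
      using B0 laplace_density_nonneg[of l] by (intro mult_left_mono) auto
    then show "exp (- \<bar>t\<bar>) * (laplace_density l * (B * exp (- \<bar>t - l\<bar>))) \<le> B * (laplace_density l * exp (- \<bar>l\<bar>))"
      by (simp add: algebra_simps)
  qed
  also have "\<dots> = B / 2" using weight(2) by simp
  finally show ?thesis .
qed

lemma renewal_equation_unique:
  fixes F G :: "real \<Rightarrow> real"
  assumes [measurable]: "F \<in> borel_measurable borel" "G \<in> borel_measurable borel"
    and F01: "\<And>x. 0 \<le> F x \<and> F x \<le> 1" and G01: "\<And>x. 0 \<le> G x \<and> G x \<le> 1"
    and F: "\<And>t. F t = exp_cdf t + exp (- \<bar>t\<bar>) * (\<integral>l. laplace_density l * F (t - l) \<partial>lborel)"
    and G: "\<And>t. G t = exp_cdf t + exp (- \<bar>t\<bar>) * (\<integral>l. laplace_density l * G (t - l) \<partial>lborel)"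
  shows "F = G"
proof -
  define D where "D x = F x - G x" for x
  have [measurable]: "D \<in> borel_measurable borel" unfolding D_def by measurable
  have D: "D t = exp (- \<bar>t\<bar>) * (\<integral>l. laplace_density l * D (t - l) \<partial>lborel)" for t
  proof -
    have "(\<integral>l. laplace_density l * D (t - l) \<partial>lborel)
        = (\<integral>l. laplace_density l * F (t - l) \<partial>lborel) - (\<integral>l. laplace_density l * G (t - l) \<partial>lborel)"
      unfolding D_def right_diff_distrib
      by (intro Bochner_Integration.integral_diff laplace_convolution_integrable[where B=1])
         (use F01 G01 in auto)
    then show ?thesis using F[of t] G[of t] unfolding D_def[of t] by (simp only:) (simp add: right_diff_distrib)
  qed
  have bound: "\<bar>D t\<bar> \<le> (1/2) ^ n" for n t
  proof (induction n arbitrary: t)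
    case 0 then show ?case using F01[of t] G01[of t] by (auto simp: D_def)
  next
    case (Suc n) then show ?case using renewal_homogeneous_halving[OF _ D, of "(1/2)^n" t] by simp
  qed
  have "D t = 0" for t
  proof (rule ccontr)
    assume "D t \<noteq> 0"
    then obtain n where "(1/2::real) ^ n < \<bar>D t\<bar>"
      using real_arch_pow_inv[of "\<bar>D t\<bar>" "1/2"] by auto
    then show False using bound[of t n] by simp
  qed
  then show ?thesis unfolding D_def by (intro ext) simp
qed

lemma stationary_real_distribution:
  assumes "ladder_stationary M"
  shows "real_distribution M"
  using assms unfolding ladder_stationary_def
  by (intro real_distribution.intro) (auto intro: real_distribution_axioms.intro)

lemma laplace_smoothing_cdf:
  assumes "real_distribution M"
  shows "(\<integral>\<^sup>+d. ennreal (laplace_cdf (t - d)) \<partial>M)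
       = (\<integral>\<^sup>+l. ennreal (laplace_density l * cdf M (t - l)) \<partial>lborel)"
proof -
  interpret real_distribution M by (rule assms)
  interpret PS: pair_sigma_finite lborel M by unfold_locales
  have "(\<integral>\<^sup>+d. ennreal (laplace_cdf (t - d)) \<partial>M)
      = (\<integral>\<^sup>+d. \<integral>\<^sup>+l. ennreal (laplace_density l) * indicator {..t - d} l \<partial>lborel \<partial>M)"
    by (simp only: laplace_cdf_integral)
  also have "\<dots> = (\<integral>\<^sup>+l. \<integral>\<^sup>+d. ennreal (laplace_density l) * indicator {..t - d} l \<partial>M \<partial>lborel)"
    by (rule PS.Fubini') (unfold indicator_def atMost_iff, measurable)
  also have "\<dots> = (\<integral>\<^sup>+l. ennreal (laplace_density l) * emeasure M {..t - l} \<partial>lborel)"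
  proof (intro nn_integral_cong)
    fix l
    have "(\<integral>\<^sup>+d. ennreal (laplace_density l) * indicator {..t - d} l \<partial>M)
        = (\<integral>\<^sup>+d. ennreal (laplace_density l) * indicator {..t - l} d \<partial>M)"
      by (intro nn_integral_cong) (auto simp: indicator_def)
    also have "\<dots> = ennreal (laplace_density l) * emeasure M {..t - l}"
      by (rule nn_integral_cmult_indicator) simp
    finally show "(\<integral>\<^sup>+d. ennreal (laplace_density l) * indicator {..t - d} l \<partial>M)
        = ennreal (laplace_density l) * emeasure M {..t - l}" .
  qed
  also have "\<dots> = (\<integral>\<^sup>+l. ennreal (laplace_density l * cdf M (t - l)) \<partial>lborel)"
    by (intro nn_integral_cong)
       (auto simp: emeasure_eq_measure cdf_def2 ennreal_mult laplace_density_nonneg)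
  finally show ?thesis .
qed

lemma stationary_cdf_renewal_equation:
  assumes RD: "real_distribution M"
    and fp: "\<And>t. emeasure M {..t} = (\<integral>\<^sup>+d. ennreal (step_cdf d t) \<partial>M)"
  shows "cdf M t = exp_cdf t + exp (- \<bar>t\<bar>) * (\<integral>l. laplace_density l * cdf M (t - l) \<partial>lborel)"
proof -
  interpret real_distribution M by (rule RD)
  have c01: "0 \<le> cdf M x" "cdf M x \<le> 1" for x
    using cdf_nonneg cdf_bounded_prob by auto
  have cm: "cdf M \<in> borel_measurable borel"
    by (rule borel_measurable_mono) (auto simp: mono_def cdf_nondecreasing)
  have [measurable]: "(\<lambda>l. cdf M (t - l)) \<in> borel_measurable borel"
    using measurable_compose[OF _ cm, of "\<lambda>l. t - l" borel] by simp
  have smooth_finite: "(\<integral>\<^sup>+l. ennreal (laplace_density l * cdf M (t - l)) \<partial>lborel) < \<top>"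
  proof -
    have "(\<integral>\<^sup>+l. ennreal (laplace_density l * cdf M (t - l)) \<partial>lborel)
        \<le> (\<integral>\<^sup>+l. ennreal (laplace_density l) \<partial>lborel)"
      using c01 laplace_density_nonneg by (intro nn_integral_mono ennreal_leI) (auto intro: mult_left_le)
    also have "\<dots> < \<top>"
      using laplace_density_integrable
      by (simp add: integrable_iff_bounded abs_of_nonneg laplace_density_nonneg)
    finally show ?thesis .
  qed
  have "cdf M t = enn2real (emeasure M {..t})" by (simp add: cdf_def2 measure_def)
  also have "emeasure M {..t}
      = ennreal (exp_cdf t) + ennreal (exp (- \<bar>t\<bar>)) * (\<integral>\<^sup>+d. ennreal (laplace_cdf (t - d)) \<partial>M)"
    unfolding fp ennreal_step_cdf using emeasure_space_1
    by (simp add: nn_integral_add nn_integral_cmult del: ennreal_plus)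
  also have "enn2real \<dots> = exp_cdf t + exp (- \<bar>t\<bar>)
        * enn2real (\<integral>\<^sup>+l. ennreal (laplace_density l * cdf M (t - l)) \<partial>lborel)"
    unfolding laplace_smoothing_cdf[OF RD] using smooth_finite exp_cdf_nonneg[of t]
    by (simp add: enn2real_plus enn2real_mult ennreal_mult_less_top del: ennreal_plus)
  also have "enn2real (\<integral>\<^sup>+l. ennreal (laplace_density l * cdf M (t - l)) \<partial>lborel)
      = (\<integral>l. laplace_density l * cdf M (t - l) \<partial>lborel)"
    using c01 laplace_density_nonneg by (subst integral_eq_nn_integral) auto
  finally show ?thesis .
qed

text \<open>The reflection of a stationary law satisfies the stationarity identity as well,
  by the reflection symmetry of step_cdf and because stationary laws have no atoms.\<close>

lemma stationary_reflection_fixed_point: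
  assumes st: "ladder_stationary M"
  shows "emeasure (distr M borel uminus) {..t} = (\<integral>\<^sup>+d. ennreal (step_cdf d t) \<partial>distr M borel uminus)"
proof -
  interpret real_distribution M by (rule stationary_real_distribution[OF st])
  have integrable_step_cdf: "integrable M (\<lambda>d. step_cdf d s)" for s
    by (rule integrable_const_bound[where B=1])
       (auto simp: step_cdf_le_1 step_cdf_nonneg abs_le_iff intro: order.trans[OF _ zero_le_one])
  have cdf_eq: "cdf M s = (\<integral>d. step_cdf d s \<partial>M)" for s
    using stationary_cdf_fixed_point[OF st, of s] step_cdf_nonneg
    by (simp add: cdf_def2 measure_def integral_eq_nn_integral)
  have "measure M {..-t} = measure M {..<-t} + measure M {-t}"
    by (subst measure_Union[symmetric]) (auto intro!: arg_cong[where f="measure M"])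
  then have below: "measure M {..<-t} = cdf M (-t)"
    using stationary_no_atoms(1)[OF st, of "-t"] by (simp add: cdf_def2 measure_def)
  have "emeasure (distr M borel uminus) {..t} = emeasure M {-t..}"
    by (subst emeasure_distr) (auto intro!: arg_cong[where f="emeasure M"])
  also have "\<dots> = ennreal (measure M (UNIV - {..<-t}))"
    by (simp add: emeasure_eq_measure Compl_eq_Diff_UNIV[symmetric])
  also have "\<dots> = ennreal (1 - cdf M (-t))"
    using prob_compl[of "{..<-t}"] below by simp
  also have "1 - cdf M (-t) = (\<integral>d. 1 - step_cdf d (-t) \<partial>M)"
    using integrable_step_cdf prob_space by (simp add: cdf_eq)
  also have "ennreal (\<integral>d. 1 - step_cdf d (-t) \<partial>M) = (\<integral>\<^sup>+d. ennreal (1 - step_cdf d (-t)) \<partial>M)"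
    using integrable_step_cdf step_cdf_le_1 by (intro nn_integral_eq_integral[symmetric]) auto
  also have "\<dots> = (\<integral>\<^sup>+d. ennreal (step_cdf (-d) t) \<partial>M)"
    by (simp add: step_cdf_reflect)
  also have "\<dots> = (\<integral>\<^sup>+d. ennreal (step_cdf d t) \<partial>distr M borel uminus)"
    by (subst nn_integral_distr) auto
  finally show ?thesis .
qed

text \<open>By uniqueness for the renewal-type equation, a stationary law is symmetric.\<close>

lemma stationary_law_symmetric:
  assumes st: "ladder_stationary M"
  shows "distr M borel uminus = M"
proof -
  interpret M: real_distribution M by (rule stationary_real_distribution[OF st])
  have RD: "real_distribution (distr M borel uminus)"
    by (intro real_distribution.intro M.prob_space_distr real_distribution_axioms.intro) auto
  interpret R: real_distribution "distr M borel uminus" by (rule RD)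
  have "cdf (distr M borel uminus) = cdf M"
  proof (rule renewal_equation_unique)
    show "cdf (distr M borel uminus) \<in> borel_measurable borel" "cdf M \<in> borel_measurable borel"
      by (auto intro!: borel_measurable_mono simp: mono_def R.cdf_nondecreasing M.cdf_nondecreasing)
    show "0 \<le> cdf (distr M borel uminus) x \<and> cdf (distr M borel uminus) x \<le> 1"
         "0 \<le> cdf M x \<and> cdf M x \<le> 1" for x
      using R.cdf_nonneg R.cdf_bounded_prob M.cdf_nonneg M.cdf_bounded_prob by auto
    show "cdf (distr M borel uminus) t = exp_cdf t + exp (- \<bar>t\<bar>)
            * (\<integral>l. laplace_density l * cdf (distr M borel uminus) (t - l) \<partial>lborel)" for t
      by (rule stationary_cdf_renewal_equation[OF RD stationary_reflection_fixed_point[OF st]])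
    show "cdf M t = exp_cdf t + exp (- \<bar>t\<bar>) * (\<integral>l. laplace_density l * cdf M (t - l) \<partial>lborel)" for t
      by (rule stationary_cdf_renewal_equation[OF M.real_distribution_axioms stationary_cdf_fixed_point[OF st]])
  qed
  then show ?thesis
    by (rule cdf_unique[OF RD M.real_distribution_axioms])
qed

text \<open>Evenness of the density follows from the symmetry of the law and of the kernel.\<close>

lemma stationary_density_even:
  assumes st: "ladder_stationary M"
  shows "stationary_density M x = stationary_density M (- x)"
proof (cases "x = 0")
  case False
  have [measurable_cong]: "sets M = sets borel"
    using st unfolding ladder_stationary_def by simp
  have "stationary_density M (- x) = enn2real (\<integral>\<^sup>+d. ennreal (step_density d (- x)) \<partial>distr M borel uminus)"
    unfolding stationary_law_symmetric[OF st] stationary_density_def ..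
  also have "\<dots> = enn2real (\<integral>\<^sup>+d. ennreal (step_density (- d) (- x)) \<partial>M)"
    by (subst nn_integral_distr) (auto simp: step_density_def)
  also have "\<dots> = stationary_density M x"
    unfolding stationary_density_def using False by (simp add: step_density_reflect)
  finally show ?thesis ..
qed simp

theorem mainTheorem6:
  fixes \<mu> :: "real measure"
  assumes "ladder_stationary \<mu>"
  shows "\<exists>\<rho> :: real \<Rightarrow> real.
           \<rho> \<in> borel_measurable borel \<and> (\<forall>d. 0 \<le> \<rho> d) \<and>
           \<mu> = density lborel (\<lambda>d. ennreal (\<rho> d)) \<and>
           (\<forall>d < 0. \<rho> d = exp d * (\<integral>\<delta>\<in>{..d}. \<rho> \<delta> \<partial>lborel)
                          + exp (2 * d) * (\<integral>\<delta>\<in>{d..}. \<rho> \<delta> * exp (- \<delta>) \<partial>lborel)) \<and>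
           (\<forall>d \<ge> 0. \<rho> d = exp (- 2 * d) * (\<integral>\<delta>\<in>{..d}. \<rho> \<delta> * exp \<delta> \<partial>lborel)
                          + exp (- d) * (\<integral>\<delta>\<in>{d..}. \<rho> \<delta> \<partial>lborel)) \<and>
           (\<forall>d. \<rho> d = \<rho> (- d))"
  using assms
  by (intro exI[of _ "stationary_density \<mu>"] conjI allI impI
        stationary_density_measurable stationary_density_nonneg stationary_density_density
        stationary_density_equation_neg stationary_density_equation_nonneg stationary_density_even)

end
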